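(* Let $X\subseteq\mathbb{R}^n$ be nonempty, closed and convex, and suppose there is $D_X>0$ with $\|u-v\|^2\le D_X^2$ for all $u,v\in X$. Let $F(x)=\mathbb{E}[F(x,\omega)]$ and assume: (A1) $F$ is $L$-Lipschitz continuous and monotone on $\mathbb{R}^n$; (A2) the solution set $X^*$ of VI$(X,F)$ is nonempty and compact and there is $C>0$ with $\|F(x^* )\|\le C$ for all $x^*\in X^*$; (A4) the state-dependent noise condition described in the context holds with constants $\nu_1,\nu_2\ge0$. Consider the variable sample-size stochastic projected reflected gradient scheme (v-SPRG) $$x_{k+1}=\Pi_X\Big(x_k-\gamma\,\tfrac{1}{N_k}\textstyle\sum_{j=1}^{N_k}F(2x_k-x_{k-1},\omega_{j,k})\Big),\quad k\ge0,$$ with $0<\gamma\le\frac{1}{8\tilde L}$, $\tilde L^2\triangleq L^2+\frac{10\nu_1^2}{N_0}$, and $\{N_k\}$ a non-decreasing sequence satisfying $\sum_{k=1}^\infty\frac{1}{N_k}<M$ for some finite $M$. Let $\bar x_K=\frac{1}{K}\sum_{k=0}^{K-1}x_k$. Then: (a) $\mathbb{E}[G(\bar x_K)]\le\mathcal{O}(1/K)$ for any $K$, i.e. there is a constant $c$ independent of $K$ with $\mathbb{E}[G(\bar x_K)]\le c/K$; (b) if $N_k\triangleq\lfloor k^a\rfloor$ with $a>1$, then the oracle complexity to ensure $\mathbb{E}[G(\bar x_K)]\le\epsilon$ satisfies $\sum_{k=1}^K N_k\le\mathcal{O}(1/\epsilon^{a+1})$.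
   Context: VI$(X,F)$: find $x^*\in X$ with $F(x^* )^T(x-x^* )\ge0$ for all $x\in X$; $X^*$ is its solution set. $\Pi_X$ is Euclidean projection onto $X$. The gap function is $G(x)\triangleq\sup_{y\in X}F(y)^T(x-y)$ for $x\in X$. The scheme uses initial points $x_{-1},x_0\in X$. At iteration $k$ the $N_k$ samples are drawn at $y_k=2x_k-x_{k-1}$. Noise condition (A4): with $\mathcal{F}_k$ the history before iteration $k$'s samples, each sample's error $w=F(y_k,\omega_{j,k})-F(y_k)$ satisfies $\mathbb{E}[w\mid\mathcal{F}_k]=0$ and $\mathbb{E}[\|w\|^2\mid\mathcal{F}_k]\le\nu_1^2\|y_k\|^2+\nu_2^2$ a.s., samples within a batch being independent given the history. The oracle complexity is the total number of sampled map evaluations $\sum_k N_k$ over the iterations needed. *)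

theory Defs
  imports "HOL-Analysis.Analysis" "HOL-Probability.Probability"
begin

definition VI_sol :: "(real^'n) set \<Rightarrow> (real^'n \<Rightarrow> real^'n) \<Rightarrow> (real^'n) set"
  where "VI_sol X F = {xs \<in> X. \<forall>x\<in>X. F xs \<bullet> (x - xs) \<ge> 0}"

definition gap_fun :: "(real^'n) set \<Rightarrow> (real^'n \<Rightarrow> real^'n) \<Rightarrow> real^'n \<Rightarrow> real"
  where "gap_fun X F x = (SUP y\<in>X. F y \<bullet> (x - y))"

definition monotone_map :: "(real^'n \<Rightarrow> real^'n) \<Rightarrow> bool"
  where "monotone_map F \<longleftrightarrow> (\<forall>x y. (F x - F y) \<bullet> (x - y) \<ge> 0)"

text \<open>Index shift: sprg_x ... k is x_k for k \<ge> 0;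
  the point x_{-1} is given separately as xm1.  Fs is the sampled map F(x,omega),
  om j k is the j-th sample (j < N k) of iteration k.\<close>
fun sprg_x :: "(real^'n) set \<Rightarrow> real \<Rightarrow> (nat \<Rightarrow> nat) \<Rightarrow> (real^'n \<Rightarrow> 'w \<Rightarrow> real^'n)
    \<Rightarrow> (nat \<Rightarrow> nat \<Rightarrow> 's \<Rightarrow> 'w) \<Rightarrow> real^'n \<Rightarrow> real^'n \<Rightarrow> nat \<Rightarrow> 's \<Rightarrow> real^'n"
  and sprg_prev :: "(real^'n) set \<Rightarrow> real \<Rightarrow> (nat \<Rightarrow> nat) \<Rightarrow> (real^'n \<Rightarrow> 'w \<Rightarrow> real^'n)
    \<Rightarrow> (nat \<Rightarrow> nat \<Rightarrow> 's \<Rightarrow> 'w) \<Rightarrow> real^'n \<Rightarrow> real^'n \<Rightarrow> nat \<Rightarrow> 's \<Rightarrow> real^'n"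
  where
  "sprg_x X \<gamma> N Fs om xm1 x0 0 s = x0"
| "sprg_x X \<gamma> N Fs om xm1 x0 (Suc k) s =
     closest_point X (sprg_x X \<gamma> N Fs om xm1 x0 k s -
       (\<gamma> / real (N k)) *\<^sub>R (\<Sum>j<N k. Fs (2 *\<^sub>R sprg_x X \<gamma> N Fs om xm1 x0 k s
                                         - sprg_prev X \<gamma> N Fs om xm1 x0 k s) (om j k s)))"
| "sprg_prev X \<gamma> N Fs om xm1 x0 0 s = xm1"
| "sprg_prev X \<gamma> N Fs om xm1 x0 (Suc k) s = sprg_x X \<gamma> N Fs om xm1 x0 k s"

definition sprg_y where
  "sprg_y X \<gamma> N Fs om xm1 x0 k s =
     2 *\<^sub>R sprg_x X \<gamma> N Fs om xm1 x0 k s - sprg_prev X \<gamma> N Fs om xm1 x0 k s"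

definition sprg_xbar where
  "sprg_xbar X \<gamma> N Fs om xm1 x0 K s =
     (1 / real K) *\<^sub>R (\<Sum>k<K. sprg_x X \<gamma> N Fs om xm1 x0 k s)"

end

theory Submission
  imports Defs
begin

(* Write e_k for the error of the batch average at iteration k and y_k = 2 x_k - x_(k-1).
   Two consecutive projection inequalities, Young's inequality and gamma L <= 1/8 give a
   one-step bound on 2 gamma <F(y_k), y_k - z> by a telescoping difference of squared
   distances, plus 3 gamma^2 (|e_k|^2 + |e_(k-1)|^2) and the martingale term
   2 gamma <e_k, z - y_k>.  Monotonicity replaces F(y_k) by F(z); summing over k gives,
   pathwise and uniformly in z in X, a bound on K G(xbar_K) by a constant plus
   3 gamma sum |e_k|^2 + R |sum e_k| - sum <e_k, y_k>.  In expectation the last sum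
   vanishes, the e_k are orthogonal with E |e_k|^2 <= sigma^2 / N_k because X is bounded,
   and sum 1/N_k is finite, so E G(xbar_K) = O(1/K).  For N_k = floor(k^a), K = O(1/eps)
   iterations cost at most K^(a+1) samples.
   Boundedness of X already bounds F and the noise variance on the iterates. *)

section \<open>Projection inequalities for the reflected step\<close>

lemma norm_add_power2_le:
  fixes u v :: "'a::real_normed_vector"
  shows "(norm (u + v))\<^sup>2 \<le> 2 * (norm u)\<^sup>2 + 2 * (norm v)\<^sup>2"
proof -
  have "(norm (u + v))\<^sup>2 \<le> (norm u + norm v)\<^sup>2"
    by (intro power_mono norm_triangle_ineq) simp
  also have "\<dots> \<le> 2 * (norm u)\<^sup>2 + 2 * (norm v)\<^sup>2"
    using zero_le_power2[of "norm u - norm v"] by (simp add: power2_eq_square algebra_simps)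
  finally show ?thesis .
qed

lemma norm_add3_power2_le:
  fixes u v w :: "'a::real_normed_vector"
  shows "(norm (u + v + w))\<^sup>2 \<le> 3 * ((norm u)\<^sup>2 + (norm v)\<^sup>2 + (norm w)\<^sup>2)"
proof -
  have "norm (u + v + w) \<le> norm u + norm v + norm w"
    by (meson add_right_mono norm_triangle_ineq order_trans)
  then have "(norm (u + v + w))\<^sup>2 \<le> (norm u + norm v + norm w)\<^sup>2"
    by (simp add: power_mono)
  also have "\<dots> \<le> 3 * ((norm u)\<^sup>2 + (norm v)\<^sup>2 + (norm w)\<^sup>2)"
    using zero_le_power2[of "norm u - norm v"] zero_le_power2[of "norm v - norm w"]
      zero_le_power2[of "norm u - norm w"]
    by (simp add: power2_eq_square algebra_simps)
  finally show ?thesis .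
qed

lemma closest_point_three_point:
  fixes c g z :: "'a::euclidean_space" and \<gamma> :: real
  assumes "convex X" "closed X" "z \<in> X"
  defines "d \<equiv> closest_point X (c - \<gamma> *\<^sub>R g)"
  shows "2 * \<gamma> * inner g (d - z) \<le> (norm (c - z))\<^sup>2 - (norm (d - z))\<^sup>2 - (norm (d - c))\<^sup>2"
proof -
  have "inner (c - \<gamma> *\<^sub>R g - d) (z - d) \<le> 0"
    unfolding d_def by (rule closest_point_dot[OF assms(1-3)])
  moreover have "2 * inner (c - d) (z - d) = (norm (d - c))\<^sup>2 + (norm (d - z))\<^sup>2 - (norm (c - z))\<^sup>2"
    by (simp add: power2_norm_eq_inner inner_diff_left inner_diff_right inner_commute)
  ultimately show ?thesis
    by (simp add: inner_diff_left inner_diff_right algebra_simps)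
qed

text \<open>Adding the projection inequalities at d and at b makes d minus the reflected point
  2c - b the test direction.\<close>
lemma closest_point_reflected:
  fixes b d g :: "'a::euclidean_space" and \<gamma> :: real
  assumes "convex X" "closed X" "b \<in> X" "d \<in> X"
  defines "c \<equiv> closest_point X (b - \<gamma> *\<^sub>R g)"
  shows "- (2 * \<gamma> * inner g (d - (2 *\<^sub>R c - b)))
           \<le> (norm (d - c))\<^sup>2 - (norm (c - b))\<^sup>2 - (norm (d - (2 *\<^sub>R c - b)))\<^sup>2"
proof -
  have "inner (b - \<gamma> *\<^sub>R g - c) (d - c) \<le> 0" "inner (b - \<gamma> *\<^sub>R g - c) (b - c) \<le> 0"
    unfolding c_def using assms by (auto intro: closest_point_dot)
  then have "inner (b - \<gamma> *\<^sub>R g - c) ((d - c) + (b - c)) \<le> 0"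
    by (simp add: inner_add_right)
  moreover have "(d - c) + (b - c) = d - (2 *\<^sub>R c - b)"
    by (simp add: scaleR_2 algebra_simps)
  moreover have "2 * inner (c - b) ((d - c) - (c - b))
      = (norm (d - c))\<^sup>2 - (norm (c - b))\<^sup>2 - (norm ((d - c) - (c - b)))\<^sup>2"
    by (simp add: power2_norm_eq_inner inner_diff_left inner_diff_right inner_commute)
  moreover have "(d - c) - (c - b) = d - (2 *\<^sub>R c - b)"
    by (simp add: scaleR_2 algebra_simps)
  ultimately show ?thesis
    by (simp add: inner_diff_left inner_diff_right algebra_simps)
qed

lemma lipschitz_reflected_points:
  assumes "L-lipschitz_on UNIV F"
  shows "(norm (F (2 *\<^sub>R c - b) - F (2 *\<^sub>R b - a)))\<^sup>2
           \<le> L\<^sup>2 * (8 * (norm (c - b))\<^sup>2 + 2 * (norm (b - a))\<^sup>2)"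
proof -
  have "(norm (F (2 *\<^sub>R c - b) - F (2 *\<^sub>R b - a)))\<^sup>2 \<le> (L * norm (2 *\<^sub>R (c - b) - (b - a)))\<^sup>2"
    using lipschitz_on_normD[OF assms, of "2 *\<^sub>R c - b" "2 *\<^sub>R b - a"]
    by (intro power_mono) (auto simp: algebra_simps)
  also have "\<dots> = L\<^sup>2 * (norm (2 *\<^sub>R (c - b) + (a - b)))\<^sup>2"
    by (simp add: power_mult_distrib algebra_simps)
  also have "\<dots> \<le> L\<^sup>2 * (8 * (norm (c - b))\<^sup>2 + 2 * (norm (b - a))\<^sup>2)"
    using norm_add_power2_le[of "2 *\<^sub>R (c - b)" "a - b"]
    by (intro mult_left_mono) (simp_all add: power_mult_distrib norm_minus_commute)
  finally show ?thesis .
qed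

lemma sprg_step_inequality:
  fixes a b c d z e0 e1 :: "'a::euclidean_space" and F :: "'a \<Rightarrow> 'a" and \<gamma> L :: real
  assumes X: "convex X" "closed X" and "b \<in> X" "z \<in> X"
    and F_lip: "L-lipschitz_on UNIV F" and "\<gamma> > 0" and "\<gamma> * L \<le> 1/8"
    and c_def: "c = closest_point X (b - \<gamma> *\<^sub>R (F (2 *\<^sub>R b - a) + e0))"
    and d_def: "d = closest_point X (c - \<gamma> *\<^sub>R (F (2 *\<^sub>R c - b) + e1))"
  shows "2 * \<gamma> * inner (F (2 *\<^sub>R c - b)) (2 *\<^sub>R c - b - z)
     \<le> (norm (c - z))\<^sup>2 + (norm (b - a))\<^sup>2 / 2 - (norm (d - z))\<^sup>2 - (norm (c - b))\<^sup>2 / 2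
       + 3 * \<gamma>\<^sup>2 * ((norm e1)\<^sup>2 + (norm e0)\<^sup>2) + 2 * \<gamma> * inner e1 (z - (2 *\<^sub>R c - b))"
proof -
  define y where "y = 2 *\<^sub>R c - b"
  define g where "g = F y + e1"
  define g' where "g' = F (2 *\<^sub>R b - a) + e0"
  have "d \<in> X"
    unfolding d_def using \<open>b \<in> X\<close> by (auto intro: closest_point_in_set[OF X(2)])
  have three_point: "2 * \<gamma> * inner g (d - z) \<le> (norm (c - z))\<^sup>2 - (norm (d - z))\<^sup>2 - (norm (d - c))\<^sup>2"
    unfolding d_def g_def y_def by (rule closest_point_three_point[OF X \<open>z \<in> X\<close>])
  have reflected: "- (2 * \<gamma> * inner g' (d - y))
      \<le> (norm (d - c))\<^sup>2 - (norm (c - b))\<^sup>2 - (norm (d - y))\<^sup>2"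
    unfolding c_def g'_def y_def by (rule closest_point_reflected[OF X \<open>b \<in> X\<close> \<open>d \<in> X\<close>])
  have young: "- (2 * \<gamma> * inner (g - g') (d - y)) \<le> \<gamma>\<^sup>2 * (norm (g - g'))\<^sup>2 + (norm (d - y))\<^sup>2"
  proof -
    have "0 \<le> (norm (\<gamma> *\<^sub>R (g - g') + (d - y)))\<^sup>2" by simp
    also have "\<dots> = \<gamma>\<^sup>2 * (norm (g - g'))\<^sup>2 + 2 * \<gamma> * inner (g - g') (d - y) + (norm (d - y))\<^sup>2"
      unfolding power2_norm_eq_inner
      by (simp add: inner_add_left inner_add_right inner_commute power2_eq_square algebra_simps)
    finally show ?thesis by linarith
  qed
  have lip: "\<gamma>\<^sup>2 * (norm (g - g'))\<^sup>2 \<le> 3/8 * (norm (c - b))\<^sup>2 + 3/32 * (norm (b - a))\<^sup>2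
      + 3 * \<gamma>\<^sup>2 * ((norm e1)\<^sup>2 + (norm e0)\<^sup>2)"
  proof -
    have "g - g' = (F y - F (2 *\<^sub>R b - a)) + e1 + - e0"
      by (simp add: g_def g'_def algebra_simps)
    then have "(norm (g - g'))\<^sup>2 \<le> 3 * ((norm (F y - F (2 *\<^sub>R b - a)))\<^sup>2 + (norm e1)\<^sup>2 + (norm e0)\<^sup>2)"
      using norm_add3_power2_le[of "F y - F (2 *\<^sub>R b - a)" e1 "- e0"] by simp
    also have "\<dots> \<le> 3 * (L\<^sup>2 * (8 * (norm (c - b))\<^sup>2 + 2 * (norm (b - a))\<^sup>2) + (norm e1)\<^sup>2 + (norm e0)\<^sup>2)"
      using lipschitz_reflected_points[OF F_lip, of c b a] unfolding y_def by simp
    finally have "\<gamma>\<^sup>2 * (norm (g - g'))\<^sup>2 \<le> \<gamma>\<^sup>2 *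
        (3 * (L\<^sup>2 * (8 * (norm (c - b))\<^sup>2 + 2 * (norm (b - a))\<^sup>2) + (norm e1)\<^sup>2 + (norm e0)\<^sup>2))"
      by (rule mult_left_mono) simp
    also have "\<dots> = 24 * (\<gamma> * L)\<^sup>2 * (norm (c - b))\<^sup>2 + 6 * (\<gamma> * L)\<^sup>2 * (norm (b - a))\<^sup>2
          + 3 * \<gamma>\<^sup>2 * ((norm e1)\<^sup>2 + (norm e0)\<^sup>2)"
      by (simp add: power_mult_distrib algebra_simps)
    finally have "\<gamma>\<^sup>2 * (norm (g - g'))\<^sup>2
        \<le> 24 * (\<gamma> * L)\<^sup>2 * (norm (c - b))\<^sup>2 + 6 * (\<gamma> * L)\<^sup>2 * (norm (b - a))\<^sup>2
          + 3 * \<gamma>\<^sup>2 * ((norm e1)\<^sup>2 + (norm e0)\<^sup>2)" .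
    moreover have "(\<gamma> * L)\<^sup>2 \<le> (1/8)\<^sup>2"
      using assms lipschitz_on_nonneg[OF F_lip] by (intro power_mono) auto
    then have "(\<gamma> * L)\<^sup>2 \<le> 1/64"
      by (simp add: power2_eq_square)
    then have "(\<gamma> * L)\<^sup>2 * (norm (c - b))\<^sup>2 \<le> 1/64 * (norm (c - b))\<^sup>2"
      "(\<gamma> * L)\<^sup>2 * (norm (b - a))\<^sup>2 \<le> 1/64 * (norm (b - a))\<^sup>2"
      by (rule mult_right_mono, simp)+
    ultimately show ?thesis by linarith
  qed
  have "inner (F y) (y - z)
      = inner g (d - z) - inner g' (d - y) - inner (g - g') (d - y) + inner e1 (z - y)"
    by (simp add: g_def inner_diff_left inner_diff_right inner_add_left algebra_simps)
  then have "2 * \<gamma> * inner (F y) (y - z) = 2 * \<gamma> * inner g (d - z) - 2 * \<gamma> * inner g' (d - y)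
      - 2 * \<gamma> * inner (g - g') (d - y) + 2 * \<gamma> * inner e1 (z - y)"
    by (simp add: right_diff_distrib distrib_left)
  then show ?thesis
    unfolding y_def[symmetric]
    using three_point reflected young lip zero_le_power2[of "norm (c - b)"]
      zero_le_power2[of "norm (b - a)"]
    by linarith
qed

lemma sprg_telescoped_inequality:
  fixes xs pv e :: "nat \<Rightarrow> 'a::euclidean_space" and F :: "'a \<Rightarrow> 'a" and \<gamma> L :: real
  assumes X: "convex X" "closed X" and xs_X: "\<And>k. xs k \<in> X" and "z \<in> X"
    and pv_Suc: "\<And>k. pv (Suc k) = xs k"
    and xs_Suc: "\<And>k. xs (Suc k) = closest_point X (xs k - \<gamma> *\<^sub>R (F (2 *\<^sub>R xs k - pv k) + e k))"
    and F_lip: "L-lipschitz_on UNIV F" and "\<gamma> > 0" and "\<gamma> * L \<le> 1/8"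
  shows "2 * \<gamma> * (\<Sum>m<n. inner (F (2 *\<^sub>R xs (Suc m) - xs m)) (2 *\<^sub>R xs (Suc m) - xs m - z))
     \<le> (norm (xs 1 - z))\<^sup>2 + (norm (xs 0 - pv 0))\<^sup>2 / 2
       - (norm (xs (Suc n) - z))\<^sup>2 - (norm (xs n - pv n))\<^sup>2 / 2
       + 3 * \<gamma>\<^sup>2 * (\<Sum>m<n. (norm (e (Suc m)))\<^sup>2 + (norm (e m))\<^sup>2)
       + 2 * \<gamma> * (\<Sum>m<n. inner (e (Suc m)) (z - (2 *\<^sub>R xs (Suc m) - xs m)))"
proof (induction n)
  case 0
  then show ?case by simp
next
  case (Suc n)
  have "2 * \<gamma> * inner (F (2 *\<^sub>R xs (Suc n) - xs n)) (2 *\<^sub>R xs (Suc n) - xs n - z)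
     \<le> (norm (xs (Suc n) - z))\<^sup>2 + (norm (xs n - pv n))\<^sup>2 / 2
       - (norm (xs (Suc (Suc n)) - z))\<^sup>2 - (norm (xs (Suc n) - xs n))\<^sup>2 / 2
       + 3 * \<gamma>\<^sup>2 * ((norm (e (Suc n)))\<^sup>2 + (norm (e n))\<^sup>2)
       + 2 * \<gamma> * inner (e (Suc n)) (z - (2 *\<^sub>R xs (Suc n) - xs n))"
    by (rule sprg_step_inequality[OF X xs_X \<open>z \<in> X\<close> assms(7-)])
      (simp_all add: xs_Suc pv_Suc)
  then show ?case
    using Suc.IH by (simp add: distrib_left pv_Suc)
qed

lemma sum_inner_reflected_telescope:
  fixes xs pv :: "nat \<Rightarrow> 'a::real_inner"
  assumes pv_Suc: "\<And>k. pv (Suc k) = xs k"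
  shows "(\<Sum>k<Suc n. inner v (xs k - z))
      = (\<Sum>k<Suc n. inner v (2 *\<^sub>R xs k - pv k - z)) - inner v (xs n - pv 0)"
proof -
  have "inner v (2 *\<^sub>R xs k - pv k - z) - inner v (xs k - z) = inner v (pv (Suc k) - pv k)" for k
    by (simp add: pv_Suc inner_diff_right scaleR_2 inner_add_right)
  then have "(\<Sum>k<Suc n. inner v (2 *\<^sub>R xs k - pv k - z)) - (\<Sum>k<Suc n. inner v (xs k - z))
      = (\<Sum>k<Suc n. inner v (pv (Suc k) - pv k))"
    by (simp only: sum_subtractf[symmetric])
  also have "\<dots> = inner v (pv (Suc n) - pv 0)"
    by (simp only: inner_sum_right[symmetric] sum_lessThan_telescope)
  finally show ?thesis by (simp add: pv_Suc)
qed

lemma gap_fun_average_le: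
  assumes "X \<noteq> {}" "K > 0" and "\<And>z. z \<in> X \<Longrightarrow> (\<Sum>k<K. inner (F z) (u k - z)) \<le> B"
  shows "gap_fun X F ((1 / real K) *\<^sub>R (\<Sum>k<K. u k)) \<le> B / real K"
  unfolding gap_fun_def
proof (rule cSUP_least[OF \<open>X \<noteq> {}\<close>])
  fix z assume "z \<in> X"
  have "(1 / real K) *\<^sub>R (\<Sum>k<K. u k) - z = (1 / real K) *\<^sub>R (\<Sum>k<K. u k - z)"
    using \<open>K > 0\<close> by (simp add: sum_subtractf scaleR_diff_right sum_constant_scaleR del: sum_constant)
  then have "inner (F z) ((1 / real K) *\<^sub>R (\<Sum>k<K. u k) - z) = (\<Sum>k<K. inner (F z) (u k - z)) / real K"
    by (simp add: inner_sum_right)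
  also have "\<dots> \<le> B / real K"
    using assms(3)[OF \<open>z \<in> X\<close>] by (simp add: divide_right_mono)
  finally show "inner (F z) ((1 / real K) *\<^sub>R (\<Sum>k<K. u k) - z) \<le> B / real K" .
qed

lemma sprg_reflected_sum_le:
  fixes xs pv e :: "nat \<Rightarrow> 'a::euclidean_space" and F :: "'a \<Rightarrow> 'a" and \<gamma> L DX :: real
  assumes X: "convex X" "closed X" and xs_X: "\<And>k. xs k \<in> X" and "pv 0 \<in> X" "z \<in> X"
    and pv_Suc: "\<And>k. pv (Suc k) = xs k"
    and xs_Suc: "\<And>k. xs (Suc k) = closest_point X (xs k - \<gamma> *\<^sub>R (F (2 *\<^sub>R xs k - pv k) + e k))"
    and F_lip: "L-lipschitz_on UNIV F" and "\<gamma> > 0" and "\<gamma> * L \<le> 1/8"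
    and diam: "\<And>u v. u \<in> X \<Longrightarrow> v \<in> X \<Longrightarrow> norm (u - v) \<le> DX"
  shows "(\<Sum>m<n. inner (F (2 *\<^sub>R xs (Suc m) - xs m)) (2 *\<^sub>R xs (Suc m) - xs m - z))
     \<le> 3 * DX\<^sup>2 / (4 * \<gamma>) + 3 * \<gamma> * (\<Sum>k<Suc n. (norm (e k))\<^sup>2)
       + inner (\<Sum>m<n. e (Suc m)) z - (\<Sum>m<n. inner (e (Suc m)) (2 *\<^sub>R xs (Suc m) - xs m))"
    (is "?A \<le> 3 * DX\<^sup>2 / (4 * \<gamma>) + 3 * \<gamma> * ?E + inner ?S z - ?T")
proof -
  have "(\<Sum>m<n. (norm (e (Suc m)))\<^sup>2) \<le> ?E"
    unfolding sum.lessThan_Suc_shift by simp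
  moreover have "(\<Sum>m<n. (norm (e m))\<^sup>2) \<le> ?E"
    unfolding sum.lessThan_Suc by simp
  ultimately have "(\<Sum>m<n. (norm (e (Suc m)))\<^sup>2 + (norm (e m))\<^sup>2) \<le> 2 * ?E"
    unfolding sum.distrib by linarith
  then have "3 * \<gamma>\<^sup>2 * (\<Sum>m<n. (norm (e (Suc m)))\<^sup>2 + (norm (e m))\<^sup>2) \<le> 3 * \<gamma>\<^sup>2 * (2 * ?E)"
    by (rule mult_left_mono) simp
  moreover have "(norm (xs 1 - z))\<^sup>2 \<le> DX\<^sup>2" "(norm (xs 0 - pv 0))\<^sup>2 \<le> DX\<^sup>2"
    using diam xs_X \<open>z \<in> X\<close> \<open>pv 0 \<in> X\<close> by (auto intro: power_mono)
  moreover have "2 * \<gamma> * (\<Sum>m<n. inner (e (Suc m)) (z - (2 *\<^sub>R xs (Suc m) - xs m)))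
      = 2 * \<gamma> * (inner ?S z - ?T)"
    by (simp add: inner_diff_right inner_sum_left sum_subtractf)
  moreover have "2 * \<gamma> * (3 * DX\<^sup>2 / (4 * \<gamma>) + 3 * \<gamma> * ?E + inner ?S z - ?T)
      = 3/2 * DX\<^sup>2 + 3 * \<gamma>\<^sup>2 * (2 * ?E) + 2 * \<gamma> * (inner ?S z - ?T)"
    using \<open>\<gamma> > 0\<close> by (simp add: field_simps power2_eq_square)
  ultimately have "2 * \<gamma> * ?A \<le> 2 * \<gamma> * (3 * DX\<^sup>2 / (4 * \<gamma>) + 3 * \<gamma> * ?E + inner ?S z - ?T)"
    using sprg_telescoped_inequality[where xs = xs and pv = pv and e = e and F = F, OF X xs_X \<open>z \<in> X\<close> pv_Suc xs_Suc F_lip assms(9,10), of n]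
      zero_le_power2[of "norm (xs (Suc n) - z)"] zero_le_power2[of "norm (xs n - pv n)"]
    by linarith
  then show ?thesis
    using \<open>\<gamma> > 0\<close> by simp
qed

lemma sprg_sum_inner_le:
  fixes xs pv e :: "nat \<Rightarrow> 'a::euclidean_space" and F :: "'a \<Rightarrow> 'a" and \<gamma> L DX :: real
  assumes X: "convex X" "closed X" and xs_X: "\<And>k. xs k \<in> X" and "pv 0 \<in> X" "z \<in> X"
    and pv_Suc: "\<And>k. pv (Suc k) = xs k"
    and xs_Suc: "\<And>k. xs (Suc k) = closest_point X (xs k - \<gamma> *\<^sub>R (F (2 *\<^sub>R xs k - pv k) + e k))"
    and F_lip: "L-lipschitz_on UNIV F" and F_mono: "\<And>u v. inner (F u - F v) (u - v) \<ge> 0"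
    and "\<gamma> > 0" and "\<gamma> * L \<le> 1/8"
    and diam: "\<And>u v. u \<in> X \<Longrightarrow> v \<in> X \<Longrightarrow> norm (u - v) \<le> DX"
  shows "(\<Sum>k<Suc n. inner (F z) (xs k - z))
     \<le> inner (F (2 *\<^sub>R xs 0 - pv 0)) (2 *\<^sub>R xs 0 - pv 0 - z) + norm (F z) * DX
       + 3 * DX\<^sup>2 / (4 * \<gamma>) + 3 * \<gamma> * (\<Sum>k<Suc n. (norm (e k))\<^sup>2)
       + inner (\<Sum>m<n. e (Suc m)) z - (\<Sum>m<n. inner (e (Suc m)) (2 *\<^sub>R xs (Suc m) - xs m))"
proof -
  have "inner (F z) (u - z) \<le> inner (F u) (u - z)" for u
    using F_mono[of u z] by (simp add: inner_diff_left)
  then have "(\<Sum>k<Suc n. inner (F z) (2 *\<^sub>R xs k - pv k - z))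
      \<le> (\<Sum>k<Suc n. inner (F (2 *\<^sub>R xs k - pv k)) (2 *\<^sub>R xs k - pv k - z))"
    by (rule sum_mono)
  also have "\<dots> = inner (F (2 *\<^sub>R xs 0 - pv 0)) (2 *\<^sub>R xs 0 - pv 0 - z)
      + (\<Sum>m<n. inner (F (2 *\<^sub>R xs (Suc m) - xs m)) (2 *\<^sub>R xs (Suc m) - xs m - z))"
    unfolding sum.lessThan_Suc_shift pv_Suc ..
  finally have "(\<Sum>k<Suc n. inner (F z) (2 *\<^sub>R xs k - pv k - z))
      \<le> inner (F (2 *\<^sub>R xs 0 - pv 0)) (2 *\<^sub>R xs 0 - pv 0 - z) + 3 * DX\<^sup>2 / (4 * \<gamma>)
        + 3 * \<gamma> * (\<Sum>k<Suc n. (norm (e k))\<^sup>2)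
        + inner (\<Sum>m<n. e (Suc m)) z - (\<Sum>m<n. inner (e (Suc m)) (2 *\<^sub>R xs (Suc m) - xs m))"
    using sprg_reflected_sum_le[where xs = xs and pv = pv and e = e and F = F, OF X xs_X assms(4,5) pv_Suc xs_Suc F_lip assms(10,11) diam, of n]
    by linarith
  moreover have "- inner (F z) (xs n - pv 0) \<le> norm (F z) * DX"
    using norm_cauchy_schwarz[of "F z" "pv 0 - xs n"] diam[OF \<open>pv 0 \<in> X\<close> xs_X[of n]]
      mult_left_mono[of "norm (pv 0 - xs n)" DX "norm (F z)"]
    by (simp add: inner_diff_right)
  ultimately show ?thesis
    unfolding sum_inner_reflected_telescope[where xs = xs and pv = pv, OF pv_Suc] by linarith
qed

section \<open>Square-integrable random vectors\<close>

lemma sigma_finite_subalgebra_of_prob_space: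
  assumes "prob_space M" "subalgebra M G"
  shows "sigma_finite_subalgebra M G"
proof -
  interpret prob_space M by fact
  have "finite_measure_subalgebra M G"
    using assms(2) by unfold_locales
  then show ?thesis
    by (rule finite_measure_subalgebra_is_sigma_finite)
qed

lemma borel_measurable_vec_component:
  fixes f :: "'s \<Rightarrow> real^'n"
  assumes "f \<in> borel_measurable M"
  shows "(\<lambda>s. f s $ i) \<in> borel_measurable M"
  using measurable_compose[OF assms borel_measurable_nth] by simp

lemma integrable_of_square_integrable_bound:
  fixes a b :: "'s \<Rightarrow> 'v::real_normed_vector" and h :: "'s \<Rightarrow> real"
  assumes "h \<in> borel_measurable M"
    and "integrable M (\<lambda>s. (norm (a s))\<^sup>2)" "integrable M (\<lambda>s. (norm (b s))\<^sup>2)"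
    and "\<And>s. \<bar>h s\<bar> \<le> norm (a s) * norm (b s)"
  shows "integrable M h"
proof (rule Bochner_Integration.integrable_bound)
  show "integrable M (\<lambda>s. ((norm (a s))\<^sup>2 + (norm (b s))\<^sup>2) / 2)"
    using assms(2,3) by simp
  show "AE s in M. norm (h s) \<le> norm (((norm (a s))\<^sup>2 + (norm (b s))\<^sup>2) / 2)"
  proof (rule AE_I2)
    fix s
    have "\<bar>h s\<bar> \<le> norm (a s) * norm (b s)"
      by (rule assms(4))
    also have "\<dots> \<le> ((norm (a s))\<^sup>2 + (norm (b s))\<^sup>2) / 2"
      using sum_squares_bound[of "norm (a s)" "norm (b s)"] by simp
    finally show "norm (h s) \<le> norm (((norm (a s))\<^sup>2 + (norm (b s))\<^sup>2) / 2)"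
      by simp
  qed
qed fact

lemma integrable_inner_square_integrable:
  fixes a b :: "'s \<Rightarrow> 'v::euclidean_space"
  assumes "a \<in> borel_measurable M" "b \<in> borel_measurable M"
    and "integrable M (\<lambda>s. (norm (a s))\<^sup>2)" "integrable M (\<lambda>s. (norm (b s))\<^sup>2)"
  shows "integrable M (\<lambda>s. inner (a s) (b s))"
  by (rule integrable_of_square_integrable_bound[of _ M a b])
    (use assms in \<open>simp_all add: Cauchy_Schwarz_ineq2\<close>)

lemma integrable_component_mult_square_integrable:
  fixes a b :: "'s \<Rightarrow> real^'n"
  assumes "a \<in> borel_measurable M" "b \<in> borel_measurable M"
    and "integrable M (\<lambda>s. (norm (a s))\<^sup>2)" "integrable M (\<lambda>s. (norm (b s))\<^sup>2)"
  shows "integrable M (\<lambda>s. a s $ i * b s $ i)"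
proof (rule integrable_of_square_integrable_bound[of _ M a b])
  show "\<bar>a s $ i * b s $ i\<bar> \<le> norm (a s) * norm (b s)" for s
    unfolding abs_mult by (intro mult_mono component_le_norm_cart) auto
  show "(\<lambda>s. a s $ i * b s $ i) \<in> borel_measurable M"
    using assms(1,2) by (intro borel_measurable_times borel_measurable_vec_component)
qed (use assms in simp_all)

lemma integral_zero_of_real_cond_exp_zero:
  assumes "sigma_finite_subalgebra M G" "integrable M f"
    and "AE s in M. real_cond_exp M G f s = 0"
  shows "(\<integral>s. f s \<partial>M) = 0"
proof -
  interpret sigma_finite_subalgebra M G by fact
  have "(\<integral>s. f s \<partial>M) = (\<integral>s. real_cond_exp M G f s \<partial>M)"
    using real_cond_exp_int(2)[OF assms(2)] by simp
  also have "\<dots> = 0"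
    using assms(3) by (simp add: integral_eq_zero_AE)
  finally show ?thesis .
qed

text \<open>The mean-zero hypothesis is only componentwise, hence the split into coordinates.\<close>
lemma integral_inner_zero_of_cond_exp_zero:
  fixes V w :: "'s \<Rightarrow> real^'n"
  assumes "sigma_finite_subalgebra M G"
    and V: "V \<in> borel_measurable G" and w: "w \<in> borel_measurable M"
    and "integrable M (\<lambda>s. (norm (V s))\<^sup>2)" "integrable M (\<lambda>s. (norm (w s))\<^sup>2)"
    and cond_exp: "\<And>i. AE s in M. real_cond_exp M G (\<lambda>s. w s $ i) s = 0"
  shows "(\<integral>s. inner (V s) (w s) \<partial>M) = 0"
proof -
  interpret sigma_finite_subalgebra M G by fact
  have V_M: "V \<in> borel_measurable M"
    by (rule measurable_from_subalg[OF subalg V])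
  have int: "integrable M (\<lambda>s. V s $ i * w s $ i)" for i
    using integrable_component_mult_square_integrable[OF V_M w assms(4,5)] .
  have "(\<integral>s. V s $ i * w s $ i \<partial>M) = 0" for i
  proof -
    have "(\<integral>s. V s $ i * w s $ i \<partial>M) = (\<integral>s. V s $ i * real_cond_exp M G (\<lambda>s. w s $ i) s \<partial>M)"
      using int V w by (intro real_cond_exp_intg(2)[symmetric] borel_measurable_vec_component)
    also have "\<dots> = 0"
      using cond_exp[of i] by (intro integral_eq_zero_AE) (auto elim: eventually_mono)
    finally show ?thesis .
  qed
  then show ?thesis
    using int by (simp add: inner_vec_def)
qed

lemma integral_le_of_nn_cond_exp_le:
  fixes f :: "'s \<Rightarrow> real"
  assumes "prob_space M" "sigma_finite_subalgebra M G"
    and f: "f \<in> borel_measurable M" "\<And>s. f s \<ge> 0"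
    and bound: "AE s in M. nn_cond_exp M G (\<lambda>s. ennreal (f s)) s \<le> ennreal c" and "c \<ge> 0"
  shows "integrable M f" "(\<integral>s. f s \<partial>M) \<le> c"
proof -
  interpret sigma_finite_subalgebra M G by fact
  interpret prob_space M by fact
  have "(\<integral>\<^sup>+s. ennreal (f s) \<partial>M) = (\<integral>\<^sup>+s. 1 * nn_cond_exp M G (\<lambda>s. ennreal (f s)) s \<partial>M)"
    using f by (subst nn_cond_exp_intg) auto
  also have "\<dots> \<le> (\<integral>\<^sup>+s. ennreal c \<partial>M)"
    using bound by (intro nn_integral_mono_AE) auto
  also have "\<dots> = ennreal c"
    by (simp add: emeasure_space_1)
  finally have nn: "(\<integral>\<^sup>+s. ennreal (f s) \<partial>M) \<le> ennreal c" .
  then show int: "integrable M f"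
    using f by (intro integrableI_nonneg) (auto simp: top.not_eq_extremum le_less_trans)
  have "ennreal (\<integral>s. f s \<partial>M) = (\<integral>\<^sup>+s. ennreal (f s) \<partial>M)"
    using int f by (intro nn_integral_eq_integral[symmetric]) auto
  with nn have "ennreal (\<integral>s. f s \<partial>M) \<le> ennreal c"
    by simp
  with \<open>c \<ge> 0\<close> show "(\<integral>s. f s \<partial>M) \<le> c"
    by (simp add: ennreal_le_iff)
qed

lemma orthogonal_sum_square_integral:
  fixes v :: "'i \<Rightarrow> 's \<Rightarrow> 'a::euclidean_space"
  assumes "finite I"
    and v: "\<And>j. j \<in> I \<Longrightarrow> v j \<in> borel_measurable M"
      "\<And>j. j \<in> I \<Longrightarrow> integrable M (\<lambda>s. (norm (v j s))\<^sup>2)"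
    and orth: "\<And>i j. i \<in> I \<Longrightarrow> j \<in> I \<Longrightarrow> i \<noteq> j \<Longrightarrow> (\<integral>s. inner (v i s) (v j s) \<partial>M) = 0"
  shows "integrable M (\<lambda>s. (norm (\<Sum>j\<in>I. v j s))\<^sup>2)"
    and "(\<integral>s. (norm (\<Sum>j\<in>I. v j s))\<^sup>2 \<partial>M) = (\<Sum>j\<in>I. \<integral>s. (norm (v j s))\<^sup>2 \<partial>M)"
proof -
  have expand: "(norm (\<Sum>j\<in>I. v j s))\<^sup>2 = (\<Sum>i\<in>I. \<Sum>j\<in>I. inner (v i s) (v j s))" for s
    by (simp add: power2_norm_eq_inner inner_sum_left inner_sum_right) (rule sum.swap)
  have int: "integrable M (\<lambda>s. inner (v i s) (v j s))" if "i \<in> I" "j \<in> I" for i j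
    using that v by (intro integrable_inner_square_integrable) auto
  then show "integrable M (\<lambda>s. (norm (\<Sum>j\<in>I. v j s))\<^sup>2)"
    unfolding expand by auto
  have "(\<integral>s. (norm (\<Sum>j\<in>I. v j s))\<^sup>2 \<partial>M) = (\<Sum>i\<in>I. \<Sum>j\<in>I. \<integral>s. inner (v i s) (v j s) \<partial>M)"
    unfolding expand using int by (simp add: Bochner_Integration.integral_sum)
  also have "\<dots> = (\<Sum>i\<in>I. \<integral>s. inner (v i s) (v i s) \<partial>M)"
  proof (rule sum.cong[OF refl])
    fix i assume "i \<in> I"
    then have "(\<Sum>j\<in>I. \<integral>s. inner (v i s) (v j s) \<partial>M)
        = (\<Sum>j\<in>I. if j = i then \<integral>s. inner (v i s) (v i s) \<partial>M else 0)"
      using orth by (intro sum.cong) auto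
    then show "(\<Sum>j\<in>I. \<integral>s. inner (v i s) (v j s) \<partial>M) = (\<integral>s. inner (v i s) (v i s) \<partial>M)"
      using \<open>i \<in> I\<close> \<open>finite I\<close> by simp
  qed
  finally show "(\<integral>s. (norm (\<Sum>j\<in>I. v j s))\<^sup>2 \<partial>M) = (\<Sum>j\<in>I. \<integral>s. (norm (v j s))\<^sup>2 \<partial>M)"
    by (simp add: power2_norm_eq_inner)
qed

section \<open>Expected gap of the averaged v-SPRG iterate\<close>

locale sprg_iteration =
  fixes X :: "(real^'n) set" and F :: "real^'n \<Rightarrow> real^'n" and Fs :: "real^'n \<Rightarrow> 'w \<Rightarrow> real^'n"
    and om :: "nat \<Rightarrow> nat \<Rightarrow> 's \<Rightarrow> 'w" and N :: "nat \<Rightarrow> nat" and xm1 x0 :: "real^'n"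
    and \<gamma> :: real
begin

abbreviation "x \<equiv> sprg_x X \<gamma> N Fs om xm1 x0"
abbreviation "prev \<equiv> sprg_prev X \<gamma> N Fs om xm1 x0"
abbreviation "y \<equiv> sprg_y X \<gamma> N Fs om xm1 x0"
abbreviation "xbar \<equiv> sprg_xbar X \<gamma> N Fs om xm1 x0"
abbreviation "w \<equiv> \<lambda>j k s. Fs (y k s) (om j k s) - F (y k s)"

definition batch_error :: "nat \<Rightarrow> 's \<Rightarrow> real^'n"
  where "batch_error k s = (1 / real (N k)) *\<^sub>R (\<Sum>j<N k. w j k s)"

lemma y_eq: "y k s = 2 *\<^sub>R x k s - prev k s"
  by (simp add: sprg_y_def)

end

locale vsprg = sprg_iteration X F Fs om N xm1 x0 \<gamma>
  for X :: "(real^'n) set" and F Fs and om :: "nat \<Rightarrow> nat \<Rightarrow> 's \<Rightarrow> 'w" and N xm1 x0 \<gamma> +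
  fixes M :: "'s measure" and Fk :: "nat \<Rightarrow> 's measure" and DX L \<nu>1 \<nu>2 :: real
  assumes X_ne: "X \<noteq> {}" and X_closed: "closed X" and X_convex: "convex X"
    and X_diam: "\<And>u v. u \<in> X \<Longrightarrow> v \<in> X \<Longrightarrow> norm (u - v) \<le> DX"
    and F_lip: "L-lipschitz_on UNIV F" and F_mono: "monotone_map F"
    and gamma_pos: "\<gamma> > 0" and gamma_L: "\<gamma> * L \<le> 1/8"
    and prob: "prob_space M"
    and filt_sub: "\<And>k. subalgebra M (Fk k)"
    and filt_mono: "\<And>k. sets (Fk k) \<subseteq> sets (Fk (Suc k))"
    and x_adapted: "\<And>k. x k \<in> borel_measurable (Fk k)"
    and samples_adapted: "\<And>k j. j < N k \<Longrightarrow>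
      (\<lambda>s. Fs (y k s) (om j k s)) \<in> borel_measurable (Fk (Suc k))"
    and w_int: "\<And>k j. j < N k \<Longrightarrow> integrable M (w j k)"
    and w_mean: "\<And>k j i. j < N k \<Longrightarrow>
      AE s in M. real_cond_exp M (Fk k) (\<lambda>s. w j k s $ i) s = 0"
    and w_var: "\<And>k j. j < N k \<Longrightarrow>
      AE s in M. nn_cond_exp M (Fk k) (\<lambda>s. ennreal ((norm (w j k s))\<^sup>2)) s
        \<le> ennreal (\<nu>1\<^sup>2 * (norm (y k s))\<^sup>2 + \<nu>2\<^sup>2)"
    and w_uncorr: "\<And>k i j. i < N k \<Longrightarrow> j < N k \<Longrightarrow> i \<noteq> j \<Longrightarrow>
      AE s in M. real_cond_exp M (Fk k) (\<lambda>s. w i k s \<bullet> w j k s) s = 0"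
    and xm1_X: "xm1 \<in> X" and x0_X: "x0 \<in> X"
    and N_pos: "\<And>k. N k > 0"
    and N_summable: "summable (\<lambda>k. 1 / real (N (Suc k)))"
begin

sublocale prob_space M
  by (rule prob)

lemma x_Suc: "x (Suc k) s = closest_point X (x k s - \<gamma> *\<^sub>R (F (2 *\<^sub>R x k s - prev k s) + batch_error k s))"
proof -
  have "(\<Sum>j<N k. w j k s) = (\<Sum>j<N k. Fs (y k s) (om j k s)) - real (N k) *\<^sub>R F (y k s)"
    by (simp add: sum_subtractf sum_constant_scaleR del: sum_constant)
  then have "(\<gamma> / real (N k)) *\<^sub>R (\<Sum>j<N k. Fs (y k s) (om j k s)) = \<gamma> *\<^sub>R (F (y k s) + batch_error k s)"
    using N_pos[of k] by (simp add: batch_error_def scaleR_diff_right)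
  then show ?thesis
    by (simp add: sprg_y_def)
qed

lemma x_in_X: "x k s \<in> X"
  by (cases k) (simp_all add: x0_X x_Suc closest_point_in_set[OF X_closed X_ne])

lemma prev_in_X: "prev k s \<in> X"
  by (cases k) (simp_all add: xm1_X x_in_X)

lemma DX_nonneg: "DX \<ge> 0"
  using X_diam[OF x0_X x0_X] by simp

definition radius :: real
  where "radius = norm x0 + DX"

definition F_bound :: real
  where "F_bound = norm (F x0) + L * DX"

lemma norm_le_radius: "u \<in> X \<Longrightarrow> norm u \<le> radius"
  using norm_triangle_ineq2[of u x0] X_diam[of u x0] x0_X unfolding radius_def by linarith

lemma norm_y_le: "norm (y k s) \<le> 3 * radius"
proof -
  have "norm (y k s) \<le> norm (2 *\<^sub>R x k s) + norm (prev k s)"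
    unfolding y_eq by (rule norm_triangle_ineq4)
  then show ?thesis
    using norm_le_radius[OF x_in_X[of k s]] norm_le_radius[OF prev_in_X[of k s]] by simp
qed

lemma norm_F_le: "norm (u - x0) \<le> DX \<Longrightarrow> norm (F u) \<le> F_bound"
  using norm_triangle_sub[of "F u" "F x0"] lipschitz_on_normD[OF F_lip, of u x0]
    mult_left_mono[of "norm (u - x0)" DX L] lipschitz_on_nonneg[OF F_lip]
  unfolding F_bound_def by simp

lemma inner_F_y0_le:
  assumes "z \<in> X"
  shows "inner (F (y 0 s)) (y 0 s - z) \<le> 2 * F_bound * DX"
proof -
  have "y 0 s - x0 = x0 - xm1"
    by (simp add: y_eq scaleR_2 algebra_simps)
  then have "norm (F (y 0 s)) \<le> F_bound"
    using X_diam[OF x0_X xm1_X] by (intro norm_F_le) simp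
  moreover have "y 0 s - z = (x0 - z) + (x0 - xm1)"
    by (simp add: y_eq scaleR_2 algebra_simps)
  then have "norm (y 0 s - z) \<le> 2 * DX"
    using X_diam[OF x0_X xm1_X] X_diam[OF x0_X assms] norm_triangle_ineq[of "x0 - z" "x0 - xm1"]
    by (simp only:)
  ultimately have "norm (F (y 0 s)) * norm (y 0 s - z) \<le> F_bound * (2 * DX)"
    by (intro mult_mono) (auto intro: order_trans[OF norm_ge_zero])
  then show ?thesis
    using norm_cauchy_schwarz[of "F (y 0 s)" "y 0 s - z"] by simp
qed

definition noise_sum :: "nat \<Rightarrow> 's \<Rightarrow> real^'n"
  where "noise_sum n s = (\<Sum>m<n. batch_error (Suc m) s)"

definition noise_corr :: "nat \<Rightarrow> 's \<Rightarrow> real"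
  where "noise_corr n s = (\<Sum>m<n. inner (batch_error (Suc m) s) (y (Suc m) s))"

definition gap_bound :: "nat \<Rightarrow> 's \<Rightarrow> real"
  where "gap_bound n s = 3 * F_bound * DX + 3 * DX\<^sup>2 / (4 * \<gamma>)
    + 3 * \<gamma> * (\<Sum>k<Suc n. (norm (batch_error k s))\<^sup>2) + radius * norm (noise_sum n s) - noise_corr n s"

lemma gap_xbar_le: "gap_fun X F (xbar (Suc n) s) \<le> gap_bound n s / real (Suc n)"
proof -
  have bound: "(\<Sum>k<Suc n. inner (F z) (x k s - z)) \<le> gap_bound n s" if "z \<in> X" for z
  proof -
    have "norm (F z) * DX \<le> F_bound * DX"
      using norm_F_le X_diam[OF that x0_X] DX_nonneg by (intro mult_right_mono) auto
    moreover have "inner (noise_sum n s) z \<le> radius * norm (noise_sum n s)"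
      using norm_cauchy_schwarz[of "noise_sum n s" z] norm_le_radius[OF that]
        mult_left_mono[of "norm z" radius "norm (noise_sum n s)"]
      by (simp add: mult.commute)
    moreover have "(\<Sum>k<Suc n. inner (F z) (x k s - z))
        \<le> inner (F (y 0 s)) (y 0 s - z) + norm (F z) * DX + 3 * DX\<^sup>2 / (4 * \<gamma>)
          + 3 * \<gamma> * (\<Sum>k<Suc n. (norm (batch_error k s))\<^sup>2)
          + inner (noise_sum n s) z - noise_corr n s"
      using sprg_sum_inner_le[where xs = "\<lambda>k. x k s" and pv = "\<lambda>k. prev k s"
          and e = "\<lambda>k. batch_error k s", OF X_convex X_closed x_in_X prev_in_X that _ x_Suc F_lip _
          gamma_pos gamma_L X_diam, of n] F_mono
      unfolding noise_sum_def noise_corr_def monotone_map_def by (simp add: y_eq)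
    ultimately show ?thesis
      using inner_F_y0_le[OF that, of s] unfolding gap_bound_def by linarith
  qed
  show ?thesis
    unfolding sprg_xbar_def by (rule gap_fun_average_le[OF X_ne _ bound]) simp_all
qed

lemma filtration_measurable:
  assumes "f \<in> measurable (Fk k) K" "k \<le> l"
  shows "f \<in> measurable (Fk l) K"
proof -
  have "sets (Fk k) \<subseteq> sets (Fk l)"
    using lift_Suc_mono_le[of "\<lambda>k. sets (Fk k)", OF filt_mono \<open>k \<le> l\<close>] .
  moreover have "space (Fk k) = space (Fk l)"
    using filt_sub[of k] filt_sub[of l] by (simp add: subalgebra_def)
  ultimately have "subalgebra (Fk l) (Fk k)"
    by (simp add: subalgebra_def)
  then show ?thesis
    using measurable_from_subalg assms(1) by blast
qed

lemma adapted_measurable: "f \<in> measurable (Fk k) K \<Longrightarrow> f \<in> measurable M K"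
  by (rule measurable_from_subalg[OF filt_sub])

lemma filtration_sigma_finite: "sigma_finite_subalgebra M (Fk k)"
  by (rule sigma_finite_subalgebra_of_prob_space[OF prob filt_sub])

lemma y_adapted: "y k \<in> borel_measurable (Fk k)"
proof -
  have "prev k \<in> borel_measurable (Fk k)"
  proof (cases k)
    case (Suc m)
    moreover have "prev (Suc m) = x m"
      by (simp add: fun_eq_iff)
    ultimately show ?thesis
      using filtration_measurable[OF x_adapted[of m], of k] by simp
  next
    case 0
    have "prev 0 = (\<lambda>s. xm1)"
      by (simp add: fun_eq_iff)
    with 0 show ?thesis
      by simp
  qed
  moreover have "y k = (\<lambda>s. 2 *\<^sub>R x k s - prev k s)"
    by (simp add: y_eq fun_eq_iff)
  ultimately show ?thesis
    using x_adapted[of k] by simp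
qed

lemma w_adapted:
  assumes "j < N k"
  shows "w j k \<in> borel_measurable (Fk (Suc k))"
proof -
  have "F \<in> borel_measurable borel"
    by (rule borel_measurable_continuous_onI[OF lipschitz_on_continuous_on[OF F_lip]])
  then have "(\<lambda>s. F (y k s)) \<in> borel_measurable (Fk (Suc k))"
    using measurable_compose[OF filtration_measurable[OF y_adapted[of k], of "Suc k"]] by simp
  then show ?thesis
    using samples_adapted[OF assms] by simp
qed

lemma batch_error_adapted: "batch_error k \<in> borel_measurable (Fk (Suc k))"
proof -
  have "batch_error k = (\<lambda>s. (1 / real (N k)) *\<^sub>R (\<Sum>j<N k. w j k s))"
    by (simp add: fun_eq_iff batch_error_def)
  then show ?thesis
    using w_adapted by simp
qed

lemma batch_error_measurable: "batch_error k \<in> borel_measurable M"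
  by (rule adapted_measurable[OF batch_error_adapted])

lemma w_measurable: "j < N k \<Longrightarrow> w j k \<in> borel_measurable M"
  using w_int by (rule borel_measurable_integrable)

definition noise_var :: real
  where "noise_var = \<nu>1\<^sup>2 * (3 * radius)\<^sup>2 + \<nu>2\<^sup>2"

lemma noise_var_nonneg: "noise_var \<ge> 0"
  by (simp add: noise_var_def)

lemma norm_y_power2_le: "(norm (y k s))\<^sup>2 \<le> (3 * radius)\<^sup>2"
  by (rule power_mono[OF norm_y_le norm_ge_zero])

lemma y_square_integrable: "integrable M (\<lambda>s. (norm (y k s))\<^sup>2)"
proof (rule integrable_const_bound[where B = "(3 * radius)\<^sup>2"])
  show "AE s in M. norm ((norm (y k s))\<^sup>2) \<le> (3 * radius)\<^sup>2"
    using norm_y_power2_le by simp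
  show "(\<lambda>s. (norm (y k s))\<^sup>2) \<in> borel_measurable M"
    using adapted_measurable[OF y_adapted] by measurable
qed

lemma w_second_moment:
  assumes "j < N k"
  shows "integrable M (\<lambda>s. (norm (w j k s))\<^sup>2)" "(\<integral>s. (norm (w j k s))\<^sup>2 \<partial>M) \<le> noise_var"
proof -
  have bound: "AE s in M. nn_cond_exp M (Fk k) (\<lambda>s. ennreal ((norm (w j k s))\<^sup>2)) s
      \<le> ennreal noise_var"
    using w_var[OF assms]
  proof eventually_elim
    case (elim s)
    from norm_y_power2_le[of k s] have "\<nu>1\<^sup>2 * (norm (y k s))\<^sup>2 + \<nu>2\<^sup>2 \<le> noise_var"
      unfolding noise_var_def by (simp add: mult_left_mono)
    with elim show ?case
      using ennreal_leI order_trans by blast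
  qed
  have "(\<lambda>s. (norm (w j k s))\<^sup>2) \<in> borel_measurable M"
    using w_measurable[OF assms] by measurable
  from integral_le_of_nn_cond_exp_le[OF prob filtration_sigma_finite this _ bound noise_var_nonneg]
  show "integrable M (\<lambda>s. (norm (w j k s))\<^sup>2)" "(\<integral>s. (norm (w j k s))\<^sup>2 \<partial>M) \<le> noise_var"
    by simp_all
qed

lemma w_orthogonal:
  assumes "i < N k" "j < N k" "i \<noteq> j"
  shows "(\<integral>s. inner (w i k s) (w j k s) \<partial>M) = 0"
proof (rule integral_zero_of_real_cond_exp_zero[OF filtration_sigma_finite])
  show "integrable M (\<lambda>s. inner (w i k s) (w j k s))"
    by (rule integrable_inner_square_integrable[OF w_measurable w_measurable
          w_second_moment(1) w_second_moment(1)]) (use assms in simp_all)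
  show "AE s in M. real_cond_exp M (Fk k) (\<lambda>s. inner (w i k s) (w j k s)) s = 0"
    by (rule w_uncorr[OF assms])
qed

lemma batch_error_second_moment:
  shows "integrable M (\<lambda>s. (norm (batch_error k s))\<^sup>2)"
    and "(\<integral>s. (norm (batch_error k s))\<^sup>2 \<partial>M) \<le> noise_var / real (N k)"
proof -
  note pythagoras = orthogonal_sum_square_integral[of "{..<N k}" "\<lambda>j. w j k" M]
  have sum_sq: "integrable M (\<lambda>s. (norm (\<Sum>j<N k. w j k s))\<^sup>2)"
    "(\<integral>s. (norm (\<Sum>j<N k. w j k s))\<^sup>2 \<partial>M) = (\<Sum>j<N k. \<integral>s. (norm (w j k s))\<^sup>2 \<partial>M)"
    using pythagoras w_measurable w_second_moment(1) w_orthogonal by auto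
  have eq: "(norm (batch_error k s))\<^sup>2 = (1 / real (N k))\<^sup>2 * (norm (\<Sum>j<N k. w j k s))\<^sup>2" for s
    by (simp add: batch_error_def power_divide)
  show "integrable M (\<lambda>s. (norm (batch_error k s))\<^sup>2)"
    unfolding eq using sum_sq(1) by simp
  have "(\<Sum>j<N k. \<integral>s. (norm (w j k s))\<^sup>2 \<partial>M) \<le> real (N k) * noise_var"
    using sum_mono[of "{..<N k}" "\<lambda>j. \<integral>s. (norm (w j k s))\<^sup>2 \<partial>M" "\<lambda>_. noise_var"]
      w_second_moment(2) by simp
  then have "(1 / real (N k))\<^sup>2 * (\<integral>s. (norm (\<Sum>j<N k. w j k s))\<^sup>2 \<partial>M)
      \<le> (1 / real (N k))\<^sup>2 * (real (N k) * noise_var)"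
    unfolding sum_sq(2) by (rule mult_left_mono) simp
  also have "\<dots> = noise_var / real (N k)"
    using N_pos[of k] by (simp add: power2_eq_square field_simps)
  finally show "(\<integral>s. (norm (batch_error k s))\<^sup>2 \<partial>M) \<le> noise_var / real (N k)"
    unfolding eq by simp
qed

lemma integral_inner_batch_error_zero:
  assumes V: "V \<in> borel_measurable (Fk k)" "integrable M (\<lambda>s. (norm (V s))\<^sup>2)"
  shows "(\<integral>s. inner (V s) (batch_error k s) \<partial>M) = 0"
proof -
  have int: "integrable M (\<lambda>s. inner (V s) (w j k s))" if "j < N k" for j
    by (rule integrable_inner_square_integrable[OF adapted_measurable[OF V(1)] w_measurable[OF that]
          V(2) w_second_moment(1)[OF that]])
  have "(\<integral>s. inner (V s) (batch_error k s) \<partial>M)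
      = (\<integral>s. (1 / real (N k)) * (\<Sum>j<N k. inner (V s) (w j k s)) \<partial>M)"
    unfolding batch_error_def inner_scaleR_right inner_sum_right ..
  also have "\<dots> = (1 / real (N k)) * (\<Sum>j<N k. \<integral>s. inner (V s) (w j k s) \<partial>M)"
    using int by (simp add: Bochner_Integration.integral_sum)
  also have "\<dots> = 0"
  proof -
    have "(\<integral>s. inner (V s) (w j k s) \<partial>M) = 0" if "j < N k" for j
      by (rule integral_inner_zero_of_cond_exp_zero[OF filtration_sigma_finite V(1)
            w_measurable[OF that] V(2) w_second_moment(1)[OF that] w_mean[OF that]])
    then show ?thesis
      by simp
  qed
  finally show ?thesis .
qed

lemma batch_error_orthogonal:
  assumes "k < l"
  shows "(\<integral>s. inner (batch_error k s) (batch_error l s) \<partial>M) = 0"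
proof (rule integral_inner_batch_error_zero)
  show "batch_error k \<in> borel_measurable (Fk l)"
    using filtration_measurable[OF batch_error_adapted[of k], of l] assms by simp
qed (rule batch_error_second_moment(1))

lemma batch_error_y_orthogonal: "(\<integral>s. inner (batch_error k s) (y k s) \<partial>M) = 0"
proof -
  have "(\<lambda>s. inner (batch_error k s) (y k s)) = (\<lambda>s. inner (y k s) (batch_error k s))"
    by (rule ext) (rule inner_commute)
  then show ?thesis
    using integral_inner_batch_error_zero[OF y_adapted y_square_integrable] by simp
qed

definition batch_series :: real
  where "batch_series = (\<Sum>k. 1 / real (N (Suc k)))"

lemma partial_batch_series_le: "(\<Sum>m<n. 1 / real (N (Suc m))) \<le> batch_series"
  unfolding batch_series_def by (rule sum_le_suminf[OF N_summable]) auto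

lemma batch_series_nonneg: "batch_series \<ge> 0"
  unfolding batch_series_def by (rule suminf_nonneg[OF N_summable]) simp

lemma noise_sum_second_moment:
  shows "integrable M (\<lambda>s. (norm (noise_sum n s))\<^sup>2)"
    and "(\<integral>s. (norm (noise_sum n s))\<^sup>2 \<partial>M) \<le> noise_var * batch_series"
proof -
  have orth: "(\<integral>s. inner (batch_error (Suc i) s) (batch_error (Suc j) s) \<partial>M) = 0" if "i \<noteq> j" for i j
  proof (cases "i < j")
    case True
    then show ?thesis
      by (simp add: batch_error_orthogonal)
  next
    case False
    with that have "(\<integral>s. inner (batch_error (Suc j) s) (batch_error (Suc i) s) \<partial>M) = 0"
      by (simp add: batch_error_orthogonal)
    then show ?thesis
      by (simp only: inner_commute)
  qed
  note pythagoras = orthogonal_sum_square_integral[of "{..<n}" "\<lambda>m. batch_error (Suc m)" M]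
  have sum_sq: "integrable M (\<lambda>s. (norm (noise_sum n s))\<^sup>2)"
    "(\<integral>s. (norm (noise_sum n s))\<^sup>2 \<partial>M) = (\<Sum>m<n. \<integral>s. (norm (batch_error (Suc m) s))\<^sup>2 \<partial>M)"
    unfolding noise_sum_def
    by (rule pythagoras; use batch_error_measurable batch_error_second_moment(1) orth in simp)+
  then show "integrable M (\<lambda>s. (norm (noise_sum n s))\<^sup>2)"
    by simp
  have "(\<Sum>m<n. \<integral>s. (norm (batch_error (Suc m) s))\<^sup>2 \<partial>M) \<le> (\<Sum>m<n. noise_var * (1 / real (N (Suc m))))"
    using batch_error_second_moment(2) by (intro sum_mono) simp
  also have "\<dots> = noise_var * (\<Sum>m<n. 1 / real (N (Suc m)))"
    by (simp add: sum_distrib_left)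
  also have "\<dots> \<le> noise_var * batch_series"
    using partial_batch_series_le noise_var_nonneg by (rule mult_left_mono)
  finally show "(\<integral>s. (norm (noise_sum n s))\<^sup>2 \<partial>M) \<le> noise_var * batch_series"
    unfolding sum_sq(2) .
qed

lemma batch_error_square_sum:
  shows "integrable M (\<lambda>s. \<Sum>k<Suc n. (norm (batch_error k s))\<^sup>2)"
    and "(\<integral>s. (\<Sum>k<Suc n. (norm (batch_error k s))\<^sup>2) \<partial>M) \<le> noise_var * (1 / real (N 0) + batch_series)"
proof -
  show "integrable M (\<lambda>s. \<Sum>k<Suc n. (norm (batch_error k s))\<^sup>2)"
    using batch_error_second_moment(1) by (rule Bochner_Integration.integrable_sum)
  have "(\<integral>s. (\<Sum>k<Suc n. (norm (batch_error k s))\<^sup>2) \<partial>M)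
      = (\<Sum>k<Suc n. \<integral>s. (norm (batch_error k s))\<^sup>2 \<partial>M)"
    using batch_error_second_moment(1) by (rule Bochner_Integration.integral_sum)
  also have "\<dots> \<le> (\<Sum>k<Suc n. noise_var * (1 / real (N k)))"
    using batch_error_second_moment(2) by (intro sum_mono) simp
  also have "\<dots> = noise_var * (1 / real (N 0) + (\<Sum>m<n. 1 / real (N (Suc m))))"
    by (simp only: sum.lessThan_Suc_shift sum_distrib_left[symmetric] distrib_left)
  also have "\<dots> \<le> noise_var * (1 / real (N 0) + batch_series)"
    using partial_batch_series_le noise_var_nonneg by (intro mult_left_mono) simp_all
  finally show "(\<integral>s. (\<Sum>k<Suc n. (norm (batch_error k s))\<^sup>2) \<partial>M) \<le> noise_var * (1 / real (N 0) + batch_series)" .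
qed

lemma noise_sum_first_moment:
  shows "integrable M (\<lambda>s. norm (noise_sum n s))"
    and "(\<integral>s. norm (noise_sum n s) \<partial>M) \<le> (1 + noise_var * batch_series) / 2"
proof -
  have AM_GM: "norm (noise_sum n s) \<le> (1 + (norm (noise_sum n s))\<^sup>2) / 2" for s
    using sum_squares_bound[of 1 "norm (noise_sum n s)"] by simp
  have bound_int: "integrable M (\<lambda>s. (1 + (norm (noise_sum n s))\<^sup>2) / 2)"
    using noise_sum_second_moment(1) by simp
  have "noise_sum n = (\<lambda>s. \<Sum>m<n. batch_error (Suc m) s)"
    by (simp add: fun_eq_iff noise_sum_def)
  then have "noise_sum n \<in> borel_measurable M"
    using batch_error_measurable by simp
  show int: "integrable M (\<lambda>s. norm (noise_sum n s))"
  proof (rule Bochner_Integration.integrable_bound[OF bound_int])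
    show "(\<lambda>s. norm (noise_sum n s)) \<in> borel_measurable M"
      using \<open>noise_sum n \<in> borel_measurable M\<close> by measurable
    show "AE s in M. norm (norm (noise_sum n s)) \<le> norm ((1 + (norm (noise_sum n s))\<^sup>2) / 2)"
      using AM_GM by (intro AE_I2) simp
  qed
  have "(\<integral>s. norm (noise_sum n s) \<partial>M) \<le> (\<integral>s. (1 + (norm (noise_sum n s))\<^sup>2) / 2 \<partial>M)"
    by (rule integral_mono[OF int bound_int AM_GM])
  also have "\<dots> = (1 + (\<integral>s. (norm (noise_sum n s))\<^sup>2 \<partial>M)) / 2"
    using noise_sum_second_moment(1) by (simp add: prob_space)
  also have "\<dots> \<le> (1 + noise_var * batch_series) / 2"
    using noise_sum_second_moment(2) by simp
  finally show "(\<integral>s. norm (noise_sum n s) \<partial>M) \<le> (1 + noise_var * batch_series) / 2" .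
qed

lemma noise_corr_integral:
  shows "integrable M (noise_corr n)" and "(\<integral>s. noise_corr n s \<partial>M) = 0"
proof -
  have int: "integrable M (\<lambda>s. inner (batch_error m s) (y m s))" for m
    by (rule integrable_inner_square_integrable[OF batch_error_measurable
          adapted_measurable[OF y_adapted] batch_error_second_moment(1) y_square_integrable])
  have eq: "noise_corr n = (\<lambda>s. \<Sum>m<n. inner (batch_error (Suc m) s) (y (Suc m) s))"
    by (simp add: fun_eq_iff noise_corr_def)
  show "integrable M (noise_corr n)"
    unfolding eq using int by (rule Bochner_Integration.integrable_sum)
  show "(\<integral>s. noise_corr n s \<partial>M) = 0"
    unfolding eq using int by (simp add: Bochner_Integration.integral_sum batch_error_y_orthogonal)
qed

definition gap_const :: real
  where "gap_const = 3 * F_bound * DX + 3 * DX\<^sup>2 / (4 * \<gamma>)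
    + 3 * \<gamma> * (noise_var * (1 / real (N 0) + batch_series)) + radius * ((1 + noise_var * batch_series) / 2)"

lemma gap_const_nonneg: "gap_const \<ge> 0"
proof -
  have "F_bound \<ge> 0" "radius \<ge> 0"
    using DX_nonneg lipschitz_on_nonneg[OF F_lip] by (simp_all add: F_bound_def radius_def)
  then show ?thesis
    unfolding gap_const_def
    using DX_nonneg gamma_pos noise_var_nonneg batch_series_nonneg by simp
qed

lemma gap_bound_integral:
  shows "integrable M (gap_bound n)" and "(\<integral>s. gap_bound n s \<partial>M) \<le> gap_const"
proof -
  have eq: "gap_bound n = (\<lambda>s. 3 * F_bound * DX + 3 * DX\<^sup>2 / (4 * \<gamma>)
      + 3 * \<gamma> * (\<Sum>k<Suc n. (norm (batch_error k s))\<^sup>2) + radius * norm (noise_sum n s) - noise_corr n s)"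
    by (simp add: fun_eq_iff gap_bound_def)
  note ints = batch_error_square_sum(1) noise_sum_first_moment(1) noise_corr_integral(1)
  show "integrable M (gap_bound n)"
    unfolding eq using ints by (simp del: sum.lessThan_Suc)
  have "(\<integral>s. gap_bound n s \<partial>M) = 3 * F_bound * DX + 3 * DX\<^sup>2 / (4 * \<gamma>)
      + 3 * \<gamma> * (\<integral>s. (\<Sum>k<Suc n. (norm (batch_error k s))\<^sup>2) \<partial>M)
      + radius * (\<integral>s. norm (noise_sum n s) \<partial>M) - (\<integral>s. noise_corr n s \<partial>M)"
    unfolding eq using ints by (simp add: prob_space del: sum.lessThan_Suc)
  also have "\<dots> \<le> gap_const"
  proof -
    have "3 * \<gamma> * (\<integral>s. (\<Sum>k<Suc n. (norm (batch_error k s))\<^sup>2) \<partial>M)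
        \<le> 3 * \<gamma> * (noise_var * (1 / real (N 0) + batch_series))"
      using batch_error_square_sum(2) gamma_pos by (intro mult_left_mono) simp_all
    moreover have "radius * (\<integral>s. norm (noise_sum n s) \<partial>M) \<le> radius * ((1 + noise_var * batch_series) / 2)"
      using noise_sum_first_moment(2) DX_nonneg by (intro mult_left_mono) (simp_all add: radius_def)
    ultimately show ?thesis
      unfolding gap_const_def noise_corr_integral(2) by linarith
  qed
  finally show "(\<integral>s. gap_bound n s \<partial>M) \<le> gap_const" .
qed

text \<open>No measurability of the gap function is needed: if it is not integrable, its Bochner
  integral is 0 by convention, which is also below the bound.\<close>
lemma expected_gap_le:
  assumes "K \<ge> 1"
  shows "(\<integral>s. gap_fun X F (xbar K s) \<partial>M) \<le> gap_const / real K"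
proof -
  obtain n where K: "K = Suc n"
    using assms by (cases K) auto
  show ?thesis
  proof (cases "integrable M (\<lambda>s. gap_fun X F (xbar K s))")
    case True
    have "(\<integral>s. gap_fun X F (xbar K s) \<partial>M) \<le> (\<integral>s. gap_bound n s / real K \<partial>M)"
      using True gap_bound_integral(1) gap_xbar_le unfolding K by (intro integral_mono) auto
    also have "\<dots> \<le> gap_const / real K"
      using gap_bound_integral(2) by (simp add: divide_right_mono)
    finally show ?thesis .
  next
    case False
    then show ?thesis
      using gap_const_nonneg by (simp add: not_integrable_integral_eq)
  qed
qed

end

section \<open>Oracle complexity\<close>

lemma sum_floor_powr_le:
  fixes N :: "nat \<Rightarrow> nat"
  assumes "a \<ge> 0" and N: "\<forall>k\<ge>1. N k = nat \<lfloor>real k powr a\<rfloor>"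
  shows "real (\<Sum>k=1..K. N k) \<le> real K powr (a + 1)"
proof -
  have "real (N k) \<le> real K powr a" if "k \<in> {1..K}" for k
  proof -
    have "real (N k) \<le> real k powr a"
      using N that by (simp add: of_nat_nat)
    also have "\<dots> \<le> real K powr a"
      using that \<open>a \<ge> 0\<close> by (intro powr_mono2) auto
    finally show ?thesis .
  qed
  then have "real (\<Sum>k=1..K. N k) \<le> real K * real K powr a"
    using sum_mono[of "{1..K}" "\<lambda>k. real (N k)" "\<lambda>_. real K powr a"] by simp
  also have "\<dots> = real K powr (a + 1)"
    by (cases "K = 0") (simp_all add: powr_add)
  finally show ?thesis .
qed

lemma oracle_complexity_of_rate:
  fixes I :: "nat \<Rightarrow> real" and N :: "nat \<Rightarrow> nat"
  assumes "c \<ge> 0" and rate: "\<forall>K\<ge>1. I K \<le> c / real K"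
    and "a \<ge> 0" and N: "\<forall>k\<ge>1. N k = nat \<lfloor>real k powr a\<rfloor>"
  shows "\<exists>c'. \<forall>\<epsilon>. 0 < \<epsilon> \<and> \<epsilon> \<le> 1 \<longrightarrow>
           (\<exists>K\<ge>1. I K \<le> \<epsilon> \<and> real (\<Sum>k=1..K. N k) \<le> c' / \<epsilon> powr (a + 1))"
proof (intro exI[of _ "(c + 2) powr (a + 1)"] allI impI)
  fix \<epsilon> :: real
  assume \<epsilon>: "0 < \<epsilon> \<and> \<epsilon> \<le> 1"
  define K where "K = nat \<lceil>c / \<epsilon>\<rceil> + 1"
  have "K \<ge> 1" "c / \<epsilon> \<le> real K"
    unfolding K_def by linarith+
  have "real K \<le> c / \<epsilon> + 2"
    unfolding K_def using \<open>c \<ge> 0\<close> \<epsilon> by (simp add: of_nat_nat) linarith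
  also have "\<dots> \<le> (c + 2) / \<epsilon>"
    using \<epsilon> by (simp add: field_simps)
  finally have "real K \<le> (c + 2) / \<epsilon>" .
  have "I K \<le> c / real K"
    using rate \<open>K \<ge> 1\<close> by blast
  also have "\<dots> \<le> \<epsilon>"
    using \<open>c / \<epsilon> \<le> real K\<close> \<open>K \<ge> 1\<close> \<epsilon> by (simp add: field_simps)
  finally have "I K \<le> \<epsilon>" .
  moreover have "real (\<Sum>k=1..K. N k) \<le> ((c + 2) / \<epsilon>) powr (a + 1)"
    using sum_floor_powr_le[OF \<open>a \<ge> 0\<close> N, of K] \<open>real K \<le> (c + 2) / \<epsilon>\<close> \<open>a \<ge> 0\<close>
    by (meson add_nonneg_nonneg of_nat_0_le_iff order_trans powr_mono2 zero_le_one)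
  ultimately show "\<exists>K\<ge>1. I K \<le> \<epsilon> \<and> real (\<Sum>k=1..K. N k) \<le> (c + 2) powr (a + 1) / \<epsilon> powr (a + 1)"
    using \<open>K \<ge> 1\<close> \<open>c \<ge> 0\<close> \<epsilon> by (auto simp: powr_divide)
qed

lemma step_size_times_lipschitz_le:
  fixes \<gamma> L t :: real
  assumes "L > 0" "t \<ge> 0" "\<gamma> > 0" "\<gamma> \<le> 1 / (8 * sqrt (L\<^sup>2 + t))"
  shows "\<gamma> * L \<le> 1/8"
proof -
  have "L \<le> sqrt (L\<^sup>2 + t)"
    using assms(1,2) by (intro real_le_rsqrt) auto
  then have "\<gamma> * L \<le> 1 / (8 * sqrt (L\<^sup>2 + t)) * sqrt (L\<^sup>2 + t)"
    using assms by (intro mult_mono) auto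
  also have "\<dots> = 1/8"
    using add_pos_nonneg[OF zero_less_power[OF \<open>L > 0\<close>, of 2] \<open>t \<ge> 0\<close>] by simp
  finally show ?thesis .
qed

theorem theorem2:
  fixes X :: "(real^'n) set"
    and F :: "real^'n \<Rightarrow> real^'n"
    and Fs :: "real^'n \<Rightarrow> 'w \<Rightarrow> real^'n"
    and M :: "'s measure"
    and Fk :: "nat \<Rightarrow> 's measure"
    and om :: "nat \<Rightarrow> nat \<Rightarrow> 's \<Rightarrow> 'w"
    and N :: "nat \<Rightarrow> nat"
    and xm1 x0 :: "real^'n"
    and DX L C \<nu>1 \<nu>2 \<gamma> Mb :: real
  defines "x \<equiv> sprg_x X \<gamma> N Fs om xm1 x0"
    and "y \<equiv> sprg_y X \<gamma> N Fs om xm1 x0"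
    and "xbar \<equiv> sprg_xbar X \<gamma> N Fs om xm1 x0"
    and "w \<equiv> (\<lambda>j k s. Fs (sprg_y X \<gamma> N Fs om xm1 x0 k s) (om j k s) - F (sprg_y X \<gamma> N Fs om xm1 x0 k s))"
  assumes X_ne: "X \<noteq> {}" and X_closed: "closed X" and X_convex: "convex X"
    and DX_pos: "DX > 0" and X_diam: "\<forall>u\<in>X. \<forall>v\<in>X. (norm (u - v))\<^sup>2 \<le> DX\<^sup>2"
    \<comment> \<open>(A1)\<close>
    and L_pos: "L > 0" and F_lip: "L-lipschitz_on UNIV F" and F_mono: "monotone_map F"
    \<comment> \<open>(A2)\<close>
    and sol_ne: "VI_sol X F \<noteq> {}" and sol_compact: "compact (VI_sol X F)"
    and C_pos: "C > 0" and sol_bound: "\<forall>xs\<in>VI_sol X F. norm (F xs) \<le> C"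
    \<comment> \<open>probability space and filtration (history before iteration k's samples)\<close>
    and prob: "prob_space M"
    and filt_sub: "\<And>k. subalgebra M (Fk k)"
    and filt_mono: "\<And>k. sets (Fk k) \<subseteq> sets (Fk (Suc k))"
    and x_adapted: "\<And>k. x k \<in> borel_measurable (Fk k)"
    and samples_adapted: "\<And>k j. j < N k \<Longrightarrow> (\<lambda>s. Fs (y k s) (om j k s)) \<in> borel_measurable (Fk (Suc k))"
    \<comment> \<open>(A4)\<close>
    and nu_nonneg: "\<nu>1 \<ge> 0" "\<nu>2 \<ge> 0"
    and w_int: "\<And>k j. j < N k \<Longrightarrow> integrable M (w j k)"
    and w_mean: "\<And>k j i. j < N k \<Longrightarrow>
        AE s in M. real_cond_exp M (Fk k) (\<lambda>s. w j k s $ i) s = 0"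
    and w_var: "\<And>k j. j < N k \<Longrightarrow>
        AE s in M. nn_cond_exp M (Fk k) (\<lambda>s. ennreal ((norm (w j k s))\<^sup>2)) s
                     \<le> ennreal (\<nu>1\<^sup>2 * (norm (y k s))\<^sup>2 + \<nu>2\<^sup>2)"
    and w_uncorr: "\<And>k i j. i < N k \<Longrightarrow> j < N k \<Longrightarrow> i \<noteq> j \<Longrightarrow>
        AE s in M. real_cond_exp M (Fk k) (\<lambda>s. w i k s \<bullet> w j k s) s = 0"
    \<comment> \<open>initial points, step size, batch sizes\<close>
    and xm1_X: "xm1 \<in> X" and x0_X: "x0 \<in> X"
    and N0_pos: "N 0 > 0" and N_mono: "mono N"
    and gamma_pos: "\<gamma> > 0"
    and gamma_le: "\<gamma> \<le> 1 / (8 * sqrt (L\<^sup>2 + 10 * \<nu>1\<^sup>2 / real (N 0)))"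
    and N_summ: "summable (\<lambda>k. 1 / real (N (Suc k)))"
    and N_sum_lt: "(\<Sum>k. 1 / real (N (Suc k))) < Mb"
  shows "(\<exists>c. \<forall>K\<ge>1. (\<integral>s. gap_fun X F (xbar K s) \<partial>M) \<le> c / real K)
       \<and> (\<forall>a>1. (\<forall>k\<ge>1. N k = nat \<lfloor>real k powr a\<rfloor>) \<longrightarrow>
            (\<exists>c'. \<forall>\<epsilon>. 0 < \<epsilon> \<and> \<epsilon> \<le> 1 \<longrightarrow>
               (\<exists>K\<ge>1. (\<integral>s. gap_fun X F (xbar K s) \<partial>M) \<le> \<epsilon>
                      \<and> real (\<Sum>k=1..K. N k) \<le> c' / \<epsilon> powr (a + 1))))"
proof -
  have diam: "norm (u - v) \<le> DX" if "u \<in> X" "v \<in> X" for u v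
    using X_diam that DX_pos by (meson less_imp_le power2_le_imp_le)
  have N_pos: "N k > 0" for k
    using N0_pos monoD[OF N_mono, of 0 k] by simp
  have gamma_L: "\<gamma> * L \<le> 1/8"
    using step_size_times_lipschitz_le[OF L_pos _ gamma_pos gamma_le] by simp
  interpret vsprg X F Fs om N xm1 x0 \<gamma> M Fk DX L \<nu>1 \<nu>2
    by (rule vsprg.intro)
      (fact X_ne X_closed X_convex diam F_lip F_mono gamma_pos gamma_L prob filt_sub filt_mono
        x_adapted[unfolded x_def] samples_adapted[unfolded y_def] w_int[unfolded w_def]
        w_mean[unfolded w_def] w_var[unfolded w_def y_def] w_uncorr[unfolded w_def]
        xm1_X x0_X N_pos N_summ)+
  have rate: "\<forall>K\<ge>1. (\<integral>s. gap_fun X F (xbar K s) \<partial>M) \<le> gap_const / real K"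
    unfolding xbar_def using expected_gap_le by blast
  show ?thesis
    using rate oracle_complexity_of_rate[OF gap_const_nonneg rate] by auto
qed

end
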